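(* Let $(L,\cap,\uplus)$ be a finite lattice with a semi-graphoid relation $(\cdot\bot\cdot\mid\cdot)$. Define $A\supseteq_{\bot}B$ to mean $(B\bot B\mid A)$. Then: (i) the relation $\supseteq_\bot$ satisfies Armstrong's axioms; (ii) the relation $(\cdot\bot\cdot\mid\cdot)$ restricted to the lattice $L_c$ of elements closed under $\supseteq_\bot$ (with meet $\cap$ and join $X\uplus_c Y=cl(X\uplus Y)$, where $cl(X)$ is the largest element $Y$ with $X\supseteq_\bot Y$) is a semi-graphoid relation on $L_c$; (iii) if the semi-graphoid relation is given by a polymatroid function $h$ on $L$, then the restriction of $h$ to $L_c$ is a polymatroid function on $L_c$.
   Context: A relation $(\cdot\bot\cdot\mid\cdot)$ on a lattice with meet $\cap$ and join $\uplus$ is semi-graphoid if for all elements $X,Y,Z,W$: (Existence) $(X\bot Y\mid X)$; (Symmetry) $(X\bot Y\mid W)$ iff $(Y\bot X\mid W)$; (Decomposition) $(X\bot Y\uplus Z\mid W)$ implies $(X\bot Z\mid W)$; (Contraction) $(X\bot Z\mid W)$ and $(X\bot Y\mid Z\uplus W)$ imply $(X\bot Y\uplus Z\mid W)$; (Weak union) $(X\bot Y\uplus Z\mid W)$ implies $(X\bot Y\mid Z\uplus W)$. A relation $\to$ satisfies Armstrong's axioms if: $X\to Y$ and $Y\to Z$ imply $X\to Z$; $X\supseteq Y$ implies $X\to Y$; $X\to Y$ implies $X\uplus Z\to Y\uplus Z$. An element $X$ is closed under $\supseteq_\bot$ if $X\supseteq_\bot Y$ implies $X\supseteq Y$. A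 polymatroid function on a lattice is a function $h:L\to\mathbb{R}$ that is non-negative, increasing ($X\supseteq Y\Rightarrow h(X)\ge h(Y)$) and submodular ($h(X)+h(Y)\ge h(X\uplus Y)+h(X\cap Y)$). The semi-graphoid relation given by $h$ is: $(X\bot Y\mid Z)$ iff $h(X\uplus Z)+h(Y\uplus Z)=h(X\uplus Y\uplus Z)+h(Z)$. *)

theory Defs
  imports Complex_Main
begin

text \<open>Semi-graphoid relation on a carrier S with join operation j.
  I X Y Z stands for (X \<bottom> Y | Z).\<close>
definition semi_graphoid_on ::
  "'a set \<Rightarrow> ('a \<Rightarrow> 'a \<Rightarrow> 'a) \<Rightarrow> ('a \<Rightarrow> 'a \<Rightarrow> 'a \<Rightarrow> bool) \<Rightarrow> bool" where
  "semi_graphoid_on S j I \<longleftrightarrow>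
     (\<forall>X\<in>S. \<forall>Y\<in>S. I X Y X) \<and>
     (\<forall>X\<in>S. \<forall>Y\<in>S. \<forall>W\<in>S. I X Y W \<longleftrightarrow> I Y X W) \<and>
     (\<forall>X\<in>S. \<forall>Y\<in>S. \<forall>Z\<in>S. \<forall>W\<in>S. I X (j Y Z) W \<longrightarrow> I X Z W) \<and>
     (\<forall>X\<in>S. \<forall>Y\<in>S. \<forall>Z\<in>S. \<forall>W\<in>S. I X Z W \<and> I X Y (j Z W) \<longrightarrow> I X (j Y Z) W) \<and>
     (\<forall>X\<in>S. \<forall>Y\<in>S. \<forall>Z\<in>S. \<forall>W\<in>S. I X (j Y Z) W \<longrightarrow> I X Y (j Z W))"

text \<open>Armstrong's axioms for a relation R, where R X Y stands for X \<rightarrow> Y.\<close>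
definition armstrong :: "('a::lattice \<Rightarrow> 'a \<Rightarrow> bool) \<Rightarrow> bool" where
  "armstrong R \<longleftrightarrow>
     (\<forall>X Y Z. R X Y \<and> R Y Z \<longrightarrow> R X Z) \<and>
     (\<forall>X Y. Y \<le> X \<longrightarrow> R X Y) \<and>
     (\<forall>X Y Z. R X Y \<longrightarrow> R (sup X Z) (sup Y Z))"

definition supseteq_bot :: "('a \<Rightarrow> 'a \<Rightarrow> 'a \<Rightarrow> bool) \<Rightarrow> 'a \<Rightarrow> 'a \<Rightarrow> bool" where
  "supseteq_bot I A B \<longleftrightarrow> I B B A"

definition closed_bot :: "('a::order \<Rightarrow> 'a \<Rightarrow> 'a \<Rightarrow> bool) \<Rightarrow> 'a \<Rightarrow> bool" where
  "closed_bot I X \<longleftrightarrow> (\<forall>Y. supseteq_bot I X Y \<longrightarrow> Y \<le> X)"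

definition Lc :: "('a::order \<Rightarrow> 'a \<Rightarrow> 'a \<Rightarrow> bool) \<Rightarrow> 'a set" where
  "Lc I = {X. closed_bot I X}"

definition cl :: "('a::order \<Rightarrow> 'a \<Rightarrow> 'a \<Rightarrow> bool) \<Rightarrow> 'a \<Rightarrow> 'a" where
  "cl I X = (GREATEST Y. supseteq_bot I X Y)"

definition join_c :: "('a::lattice \<Rightarrow> 'a \<Rightarrow> 'a \<Rightarrow> bool) \<Rightarrow> 'a \<Rightarrow> 'a \<Rightarrow> 'a" where
  "join_c I X Y = cl I (sup X Y)"

definition polymatroid_on ::
  "'a::order set \<Rightarrow> ('a \<Rightarrow> 'a \<Rightarrow> 'a) \<Rightarrow> ('a \<Rightarrow> 'a \<Rightarrow> 'a) \<Rightarrow> ('a \<Rightarrow> real) \<Rightarrow> bool" where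
  "polymatroid_on S j m h \<longleftrightarrow>
     (\<forall>X\<in>S. 0 \<le> h X) \<and>
     (\<forall>X\<in>S. \<forall>Y\<in>S. Y \<le> X \<longrightarrow> h Y \<le> h X) \<and>
     (\<forall>X\<in>S. \<forall>Y\<in>S. h X + h Y \<ge> h (j X Y) + h (m X Y))"

definition rel_of_h :: "('a::lattice \<Rightarrow> real) \<Rightarrow> 'a \<Rightarrow> 'a \<Rightarrow> 'a \<Rightarrow> bool" where
  "rel_of_h h X Y Z \<longleftrightarrow> h (sup X Z) + h (sup Y Z) = h (sup (sup X Y) Z) + h Z"

end

theory Submission
  imports Defs
begin

text \<open>Call W' determined by W when (W' \<bottom> W' | W), i.e. W \<supseteq>-\<bottom> W'. A determined element is
  independent of everything given W, so it may be added to either the right argument or the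
  conditioning argument without changing independence. This makes \<supseteq>-\<bottom> an Armstrong relation,
  and, over a finite lattice, makes Y and cl(Y) interchangeable in every independence statement.
  The latter gives the semi-graphoid axioms on L_c, and for a relation given by h it forces
  h(cl X) = h X, so h stays a polymatroid on L_c.\<close>

locale semi_graphoid =
  fixes I :: "'a::lattice \<Rightarrow> 'a \<Rightarrow> 'a \<Rightarrow> bool"
  assumes semi_graphoid: "semi_graphoid_on UNIV sup I"
begin

lemma existence: "I X Y X"
  using semi_graphoid unfolding semi_graphoid_on_def by blast

lemma symmetry: "I X Y W \<Longrightarrow> I Y X W"
  using semi_graphoid unfolding semi_graphoid_on_def by blast

lemma decomposition: "I X (sup Y Z) W \<Longrightarrow> I X Z W"
  using semi_graphoid unfolding semi_graphoid_on_def by blast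

lemma contraction: "I X Z W \<Longrightarrow> I X Y (sup Z W) \<Longrightarrow> I X (sup Y Z) W"
  using semi_graphoid unfolding semi_graphoid_on_def by blast

lemma weak_union: "I X (sup Y Z) W \<Longrightarrow> I X Y (sup Z W)"
  using semi_graphoid unfolding semi_graphoid_on_def by blast

lemma indep_if_le_cond: "Y \<le> W \<Longrightarrow> I X Y W"
  using decomposition[of X W Y W] symmetry[OF existence] by (simp add: sup_absorb1)

lemma determined_indep: "I Y Y W \<Longrightarrow> I Y V W"
proof -
  assume "I Y Y W"
  moreover have "I Y V (sup Y W)"
    by (rule symmetry, rule indep_if_le_cond) simp
  ultimately have "I Y (sup V Y) W"
    by (rule contraction)
  then show ?thesis
    using decomposition[of Y Y V W] by (simp add: sup_commute)
qed

lemma indep_determined: "I W' W' W \<Longrightarrow> I X W' W"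
  by (rule symmetry) (rule determined_indep)

lemma determined_mono_cond: "I Y Y W \<Longrightarrow> I Y Y (sup W Z)"
  using weak_union[OF determined_indep[of Y W "sup Y Z"]] by (simp add: sup_commute)

lemma determined_trans: "I Y Y X \<Longrightarrow> I Z Z Y \<Longrightarrow> I Z Z X"
proof -
  assume YX: "I Y Y X" and ZY: "I Z Z Y"
  have "I Z Z (sup Y X)"
    using determined_mono_cond[OF ZY] by (simp add: sup_commute)
  with indep_determined[OF YX] have "I Z (sup Z Y) X"
    by (rule contraction)
  then show ?thesis
    using decomposition[of Z Y Z X] by (simp add: sup_commute)
qed

lemma determined_sup: "I A A W \<Longrightarrow> I B B W \<Longrightarrow> I (sup A B) (sup A B) W"
proof -
  assume A: "I A A W" and B: "I B B W"
  have "I (sup A B) A (sup B W)"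
    using indep_determined[OF determined_mono_cond[OF A, of B]] by (simp add: sup_commute)
  with indep_determined[OF B] show ?thesis
    by (rule contraction)
qed

lemma indep_sup_determined_right_iff:
  assumes "I Y' Y' Y"
  shows "I X (sup Y Y') W \<longleftrightarrow> I X Y W"
proof
  assume "I X Y W"
  moreover have "I X Y' (sup Y W)"
    using indep_determined[OF determined_mono_cond[OF assms]] .
  ultimately show "I X (sup Y Y') W"
    using contraction by (simp add: sup_commute)
qed (use decomposition[of X Y' Y W] in \<open>simp add: sup_commute\<close>)

lemma indep_sup_determined_cond_iff:
  assumes "I W' W' W"
  shows "I X Y (sup W' W) \<longleftrightarrow> I X Y W"
proof
  assume "I X Y (sup W' W)"
  with indep_determined[OF assms] have "I X (sup Y W') W"
    by (rule contraction)
  then show "I X Y W"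
    using decomposition[of X W' Y W] by (simp add: sup_commute)
next
  assume "I X Y W"
  moreover have "I X W' (sup Y W)"
    using indep_determined[OF determined_mono_cond[OF assms, of Y]] by (simp add: sup_commute)
  ultimately have "I X (sup W' Y) W"
    by (rule contraction)
  then show "I X Y (sup W' W)"
    using weak_union[of X Y W' W] by (simp add: sup_commute)
qed

lemma armstrong_supseteq_bot: "armstrong (supseteq_bot I)"
  unfolding armstrong_def supseteq_bot_def
proof (intro conjI allI impI)
  fix X Y Z
  assume "I Y Y X \<and> I Z Z Y"
  then show "I Z Z X"
    using determined_trans by blast
next
  fix X Y :: 'a
  assume "Y \<le> X"
  then show "I Y Y X"
    by (rule indep_if_le_cond)
next
  fix X Y Z
  assume "I Y Y X"
  then have "I Y Y (sup X Z)"
    by (rule determined_mono_cond)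
  moreover have "I Z Z (sup X Z)"
    by (rule indep_if_le_cond) simp
  ultimately show "I (sup Y Z) (sup Y Z) (sup X Z)"
    by (rule determined_sup)
qed

end

locale finite_semi_graphoid = semi_graphoid I for I :: "'a::{finite,lattice} \<Rightarrow> 'a \<Rightarrow> 'a \<Rightarrow> bool"
begin

lemma cl_greatest: "supseteq_bot I X (cl I X) \<and> (\<forall>Y. supseteq_bot I X Y \<longrightarrow> Y \<le> cl I X)"
proof -
  let ?D = "{Y. supseteq_bot I X Y}"
  have "X \<in> ?D"
    by (simp add: supseteq_bot_def indep_if_le_cond)
  then obtain M where M: "M \<in> ?D" "\<forall>Y\<in>?D. M \<le> Y \<longrightarrow> M = Y"
    using finite_has_maximal[of ?D] by auto
  have greatest: "\<forall>Y\<in>?D. Y \<le> M"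
  proof
    fix Y assume "Y \<in> ?D"
    then have "sup M Y \<in> ?D"
      using M(1) determined_sup unfolding supseteq_bot_def by auto
    then show "Y \<le> M"
      using M(2) by (metis sup.cobounded1 sup.cobounded2)
  qed
  have "cl I X = M"
    unfolding cl_def by (rule Greatest_equality) (use M greatest in auto)
  then show ?thesis
    using M greatest by auto
qed

lemma cl_determined: "I (cl I X) (cl I X) X"
  using cl_greatest unfolding supseteq_bot_def by blast

lemma le_cl: "X \<le> cl I X"
  using cl_greatest indep_if_le_cond unfolding supseteq_bot_def by blast

lemma sup_cl: "sup X (cl I X) = cl I X"
  using le_cl by (rule sup_absorb2)

lemma indep_cl_right_iff: "I X (cl I Y) W \<longleftrightarrow> I X Y W"
  using indep_sup_determined_right_iff[OF cl_determined, of X Y W] by (simp add: sup_cl)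

lemma indep_cl_cond_iff: "I X Y (cl I W) \<longleftrightarrow> I X Y W"
  using indep_sup_determined_cond_iff[OF cl_determined, of X Y W] by (simp add: sup_cl sup_commute)

lemma cl_in_Lc: "cl I X \<in> Lc I"
  using cl_greatest determined_trans[OF cl_determined]
  unfolding Lc_def closed_bot_def supseteq_bot_def by blast

lemma inf_in_Lc: "X \<in> Lc I \<Longrightarrow> Y \<in> Lc I \<Longrightarrow> inf X Y \<in> Lc I"
proof -
  assume X: "X \<in> Lc I" and Y: "Y \<in> Lc I"
  have "Z \<le> inf X Y" if "I Z Z (inf X Y)" for Z
  proof -
    have "I Z Z X" "I Z Z Y"
      using determined_trans[OF indep_if_le_cond that] by simp_all
    then show ?thesis
      using X Y unfolding Lc_def closed_bot_def supseteq_bot_def by simp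
  qed
  then show ?thesis
    unfolding Lc_def closed_bot_def supseteq_bot_def by simp
qed

lemma semi_graphoid_on_Lc: "semi_graphoid_on (Lc I) (join_c I) I"
  unfolding semi_graphoid_on_def join_c_def indep_cl_right_iff indep_cl_cond_iff
  using existence symmetry decomposition contraction weak_union by (intro conjI ballI impI) blast+

lemma polymatroid_on_Lc:
  assumes "polymatroid_on UNIV sup inf h" and "I = rel_of_h h"
  shows "polymatroid_on (Lc I) (join_c I) inf h"
proof -
  have "h (cl I X) = h X" for X
    using cl_determined[of X] sup_cl[of X] assms(2)
    unfolding rel_of_h_def by (simp add: sup_commute)
  with assms(1) show ?thesis
    unfolding polymatroid_on_def join_c_def by simp
qed

end

theorem theorem2:
  fixes I :: "'a::{finite,lattice} \<Rightarrow> 'a \<Rightarrow> 'a \<Rightarrow> bool"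
  assumes "semi_graphoid_on UNIV sup I"
  shows "armstrong (supseteq_bot I)
    \<and> ((\<forall>X\<in>Lc I. \<forall>Y\<in>Lc I. inf X Y \<in> Lc I \<and> join_c I X Y \<in> Lc I)
         \<and> semi_graphoid_on (Lc I) (join_c I) I)
    \<and> (\<forall>h. polymatroid_on UNIV sup inf h \<and> I = rel_of_h h \<longrightarrow>
         polymatroid_on (Lc I) (join_c I) inf h)"
proof -
  interpret finite_semi_graphoid I
    using assms by unfold_locales
  show ?thesis
    using armstrong_supseteq_bot inf_in_Lc cl_in_Lc semi_graphoid_on_Lc polymatroid_on_Lc
    unfolding join_c_def by blast
qed

end
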